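(* Let $\mathbb{F}_q$ be a finite field of characteristic $p\ge3$. For every $u\in\mathbb{F}_q\setminus\{0,1\}$, $$\#\mathcal{I}_{\mathrm{L},u}=\begin{cases}1,& u=-1 \text{ and } p=3,\\ 3,& u\in\{-1,2,2^{-1}\},\ q\equiv1,3,7\pmod 8,\ p>3,\\ 2,& u\in\{-1,2\},\ q\equiv5\pmod8,\\ 1,& u=2^{-1},\ q\equiv5\pmod8,\\ 2,& u^2-u+1=0,\ q\equiv1\pmod{12},\ p>3,\\ 1,& u^2-u+1=0,\ q\not\equiv1\pmod{12},\\ 3,& \chi_2(-1)=-1 \text{ and } u\notin\mathcal{B},\\ 2,& \chi_2(-1)=1,\ \chi_2(u)=\chi_2(1-u)=-1,\ u\notin\mathcal{B},\\ 4,& \chi_2(-1)=1,\ \chi_2(u)\chi_2(1-u)=-1,\ u\notin\mathcal{B},\\ 6,& \chi_2(-1)=1,\ \chi_2(u)=\chi_2(1-u)=1,\ u\notin\mathcal{B}.\end{cases}$$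
   Context: For $u\in\mathbb{F}_q\setminus\{0,1\}$, $E_{\mathrm{L},u}$ is the Legendre curve $Y^2=X(X-1)(X-u)$. Two elliptic curves in Weierstrass form are $\mathbb{F}_q$-isomorphic ($\cong_{\mathbb{F}_q}$) if one is transformed into the other by $X\mapsto\alpha^2\tilde X+\beta$, $Y\mapsto\alpha^3\tilde Y+\alpha^2\gamma\tilde X+\delta$ with $\alpha,\beta,\gamma,\delta\in\mathbb{F}_q$, $\alpha\ne0$. Define $\mathcal{I}_{\mathrm{L},u}=\{v\in\mathbb{F}_q\setminus\{0,1\}: E_{\mathrm{L},u}\cong_{\mathbb{F}_q}E_{\mathrm{L},v}\}$. Let $\mathcal{B}=\{u\in\mathbb{F}_q : (u^2-u+1)(u+1)(u-2)(2u-1)=0\}$. $\chi_2$ is the quadratic character of $\mathbb{F}_q$ ($\chi_2(w)=1$ if $w\ne0$ is a square, $-1$ if $w$ is a nonsquare). *)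

theory Defs
  imports "HOL-Computational_Algebra.Polynomial" "HOL-Library.Cardinality"
begin

text \<open>Bivariate polynomials over a ring are represented as 'a poly poly:
  the outer variable is Y, the inner variable is X.\<close>

definition varX :: "'a::comm_ring_1 poly poly" where
  "varX = [:[:0, 1:]:]"

definition varY :: "'a::comm_ring_1 poly poly" where
  "varY = [:0, 1:]"

definition cst :: "'a::comm_ring_1 \<Rightarrow> 'a poly poly" where
  "cst c = [:[:c:]:]"

text \<open>A Weierstrass curve Y^2 + a1 X Y + a3 Y = X^3 + a2 X^2 + a4 X + a6 is given
  by its coefficient tuple (a1, a2, a3, a4, a6).\<close>

type_synonym 'a weierstrass = "'a \<times> 'a \<times> 'a \<times> 'a \<times> 'a"

fun weier_eval :: "'a::comm_ring_1 weierstrass \<Rightarrow> 'a poly poly \<Rightarrow> 'a poly poly \<Rightarrow> 'a poly poly" where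
  "weier_eval (a1, a2, a3, a4, a6) X Y =
     Y ^ 2 + cst a1 * X * Y + cst a3 * Y - X ^ 3 - cst a2 * X ^ 2 - cst a4 * X - cst a6"

text \<open>E is transformed into E' by X \<mapsto> \<alpha>^2 X + \<beta>, Y \<mapsto> \<alpha>^3 Y + \<alpha>^2 \<gamma> X + \<delta>:
  substituting into the equation of E gives (\<alpha>^6 times) the equation of E'.\<close>
definition weier_iso :: "'a::field weierstrass \<Rightarrow> 'a weierstrass \<Rightarrow> bool" where
  "weier_iso E E' \<longleftrightarrow> (\<exists>\<alpha> \<beta> \<gamma> \<delta>. \<alpha> \<noteq> 0 \<and>
      weier_eval E (cst (\<alpha>^2) * varX + cst \<beta>)
                   (cst (\<alpha>^3) * varY + cst (\<alpha>^2 * \<gamma>) * varX + cst \<delta>)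
      = cst (\<alpha>^6) * weier_eval E' varX varY)"

text \<open>Legendre curve Y^2 = X(X-1)(X-u) = X^3 - (1+u) X^2 + u X.\<close>
definition legendre :: "'a::comm_ring_1 \<Rightarrow> 'a weierstrass" where
  "legendre u = (0, - (1 + u), 0, u, 0)"

definition iso_set_L :: "'a::field \<Rightarrow> 'a set" where
  "iso_set_L u = {v. v \<noteq> 0 \<and> v \<noteq> 1 \<and> weier_iso (legendre u) (legendre v)}"

definition badset :: "'a::field set" where
  "badset = {u. (u^2 - u + 1) * (u + 1) * (u - 2) * (2 * u - 1) = 0}"

definition chi2 :: "'a::field \<Rightarrow> int" where
  "chi2 w = (if w = 0 then 0 else if (\<exists>y. y ^ 2 = w) then 1 else -1)"

end

theory Submission
  imports Defs
begin

text \<open>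
  Comparing coefficients shows that an isomorphism \<open>E_u \<cong> E_v\<close> must translate one root
  \<open>b \<in> {0, 1, u}\<close> of the cubic to \<open>0\<close> and scale by some \<open>\<alpha>^2\<close>; the scaling factor has to
  be the difference \<open>e - b\<close> to another root \<open>e\<close>, and then \<open>v = (e' - b) / (e - b)\<close>.
  Hence \<open>\<I>_u\<close> consists of those of the six anharmonic images
  \<open>u, 1/u, 1 - u, 1/(1 - u), (u - 1)/u, u/(u - 1)\<close> whose scaling factor
  (\<open>1, u, -1, u - 1, -u, 1 - u\<close> respectively) is a square in \<open>F_q\<close>.
\<close>

definition is_square :: "'a::field \<Rightarrow> bool" where
  "is_square w \<longleftrightarrow> (\<exists>y. y^2 = w)"

lemma is_square_1 [simp]: "is_square (1::'a::field)"
  unfolding is_square_def by (rule exI[of _ 1]) simp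

lemma is_square_inverse: "is_square (1 / w) \<longleftrightarrow> is_square (w::'a::field)"
proof -
  have "is_square (1 / x)" if "is_square x" for x :: 'a
    using that unfolding is_square_def by (metis power_one_over)
  from this[of w] this[of "1 / w"] show ?thesis by auto
qed

lemma of_nat_neq_0_below_CHAR:
  assumes "0 < n" and "n < CHAR('a::semiring_1)"
  shows "of_nat n \<noteq> (0::'a)"
  using assms by (auto simp: of_nat_eq_0_iff_char_dvd dest: dvd_imp_le)

lemma two_neq_0:
  assumes "CHAR('a::semiring_1) \<ge> 3" shows "(2::'a) \<noteq> 0"
  using of_nat_neq_0_below_CHAR[of 2, where 'a='a] assms by simp

lemma three_neq_0:
  assumes "CHAR('a::semiring_1) > 3" shows "(3::'a) \<noteq> 0"
  using of_nat_neq_0_below_CHAR[of 3, where 'a='a] assms by simp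

lemma three_eq_0:
  assumes "CHAR('a::semiring_1) = 3" shows "(3::'a) = 0"
  using of_nat_CHAR[where 'a='a] assms by simp

lemma two_eq_minus_one_char3:
  assumes "CHAR('a::ring_1) = 3" shows "(2::'a) = -1"
  using three_eq_0[OF assms] by (simp add: eq_neg_iff_add_eq_0)


lemma one_neq_minus_one:
  assumes "CHAR('a::ring_1) \<ge> 3" shows "(1::'a) \<noteq> -1"
  using two_neq_0[OF assms] by (metis add_eq_0_iff one_add_one)

text \<open>Fermat: multiplication by \<open>x\<close> permutes the nonzero elements.\<close>
lemma fermat_little:
  fixes x :: "'a::{field,finite}"
  assumes "x \<noteq> 0"
  shows "x ^ (CARD('a) - 1) = 1"
proof -
  define N where "N = (UNIV :: 'a set) - {0}"
  have card_N: "card N = CARD('a) - 1"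
    unfolding N_def by (simp add: card_Diff_singleton)
  have "bij_betw ((*) x) N N"
    by (rule bij_betw_byWitness[where f' = "\<lambda>y. y / x"]) (use assms in \<open>auto simp: N_def\<close>)
  then have "(\<Prod>y\<in>N. x * y) = (\<Prod>y\<in>N. y)"
    using prod.reindex_bij_betw[of "(*) x" N N id] by simp
  then have "x ^ card N * (\<Prod>y\<in>N. y) = 1 * (\<Prod>y\<in>N. y)"
    by (simp add: prod.distrib)
  moreover have "(\<Prod>y\<in>N. y) \<noteq> 0" by (simp add: N_def)
  ultimately show ?thesis
    using card_N by (metis mult_right_cancel)
qed

text \<open>In odd characteristic \<open>q\<close> is odd, since otherwise \<open>(-1)^(q-1) = -1\<close>.\<close>
lemma card_odd:
  assumes "CHAR('a::{field,finite}) \<ge> 3"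
  shows "odd CARD('a)"
proof
  assume "even CARD('a)"
  moreover have "CARD('a) \<noteq> 0" by simp
  ultimately have "(-1::'a) ^ (CARD('a) - 1) = -1" by simp
  with fermat_little[of "-1::'a"] show False
    using one_neq_minus_one[OF assms] by simp
qed

lemma card_minus_one_even:
  assumes "CHAR('a::{field,finite}) \<ge> 3"
  shows "CARD('a) - 1 = 2 * ((CARD('a) - 1) div 2)"
  using card_odd[OF assms] by presburger

lemma half_card_pos:
  assumes "CHAR('a::{field,finite}) \<ge> 3"
  shows "(CARD('a) - 1) div 2 > 0"
proof -
  have "card {0, 1::'a} \<le> CARD('a)" by (rule card_mono) simp_all
  then show ?thesis using card_odd[OF assms] by simp presburger
qed

text \<open>Nonzero squares are roots of \<open>w^((q-1)/2) = 1\<close>, and there are at least \<open>(q-1)/2\<close> of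
  them, since every nonzero square has at most two square roots.\<close>
lemma square_power_half_card:
  fixes w :: "'a::{field,finite}"
  assumes "CHAR('a) \<ge> 3" and "w \<noteq> 0" and "is_square w"
  shows "w ^ ((CARD('a) - 1) div 2) = 1"
proof -
  obtain y where y: "y^2 = w" using assms(3) unfolding is_square_def by blast
  then have "y \<noteq> 0" using assms(2) by auto
  then have "y ^ (2 * ((CARD('a) - 1) div 2)) = 1"
    using fermat_little[of y] card_minus_one_even[OF assms(1)] by simp
  then show ?thesis using y by (simp add: power_mult)
qed

lemma card_nonzero_squares:
  assumes "CHAR('a::{field,finite}) \<ge> 3"
  shows "(CARD('a) - 1) div 2 \<le> card {w::'a. w \<noteq> 0 \<and> is_square w}"
proof -
  define S where "S = {w::'a. w \<noteq> 0 \<and> is_square w}"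
  have cover: "UNIV - {0} = (\<Union>s\<in>S. {y::'a. y^2 = s})"
    by (auto simp: S_def is_square_def)
  have fibre: "card {y::'a. y^2 = s} \<le> 2" if s: "s \<in> S" for s
  proof -
    obtain r where "r^2 = s" using s unfolding S_def is_square_def by blast
    then have "{y. y^2 = s} = {r, -r}" by (auto simp: power2_eq_iff)
    then show ?thesis by (simp add: card_insert_if)
  qed
  have "CARD('a) - 1 = card (UNIV - {0::'a})" by (simp add: card_Diff_singleton)
  also have "\<dots> \<le> (\<Sum>s\<in>S. card {y::'a. y^2 = s})"
    unfolding cover by (rule card_UN_le) simp
  also have "\<dots> \<le> 2 * card S"
    using sum_mono[of S "\<lambda>s. card {y::'a. y^2 = s}" "\<lambda>_. 2"] fibre by simp
  finally show ?thesis unfolding S_def by simp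
qed

text \<open>Euler's criterion: the nonzero squares are exactly the roots of
  \<open>w^((q - 1) / 2) = 1\<close>, since there are at least as many nonzero squares as a
  polynomial of that degree has roots.\<close>
lemma euler_criterion:
  fixes w :: "'a::{field,finite}"
  assumes ch: "CHAR('a) \<ge> 3" and w: "w \<noteq> 0"
  shows "is_square w \<longleftrightarrow> w ^ ((CARD('a) - 1) div 2) = 1"
proof -
  define m where "m = (CARD('a) - 1) div 2"
  define S where "S = {w::'a. w \<noteq> 0 \<and> is_square w}"
  define R where "R = {w::'a. w ^ m = 1}"
  have "S \<subseteq> R"
    using square_power_half_card[OF ch] by (auto simp: S_def R_def m_def)
  moreover have "card R \<le> m"
  proof -
    define p :: "'a poly" where "p = monom 1 m + [:-1:]"
    have deg: "degree p = m"
      using half_card_pos[OF ch] by (simp add: p_def m_def degree_add_eq_left degree_monom_eq)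
    then have "p \<noteq> 0" using half_card_pos[OF ch] by (auto simp: m_def)
    moreover have "R = {x. poly p x = 0}" by (simp add: R_def p_def poly_monom)
    ultimately show ?thesis using card_poly_roots_bound[of p] deg by simp
  qed
  moreover have "m \<le> card S"
    using card_nonzero_squares[OF ch] by (simp add: S_def m_def)
  ultimately have "S = R" by (intro card_seteq) simp_all
  then show ?thesis using w by (auto simp: S_def R_def m_def)
qed

lemma power_half_card_cases:
  fixes w :: "'a::{field,finite}"
  assumes ch: "CHAR('a) \<ge> 3" and w: "w \<noteq> 0"
  shows "w ^ ((CARD('a) - 1) div 2) = 1 \<or> w ^ ((CARD('a) - 1) div 2) = -1"
proof -
  have "(w ^ ((CARD('a) - 1) div 2))^2 = 1"
    using fermat_little[OF w] card_minus_one_even[OF ch]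
    by (metis power_mult mult.commute)
  then show ?thesis by (simp add: power2_eq_1_iff)
qed

lemma chi2_euler:
  fixes w :: "'a::{field,finite}"
  assumes ch: "CHAR('a) \<ge> 3"
  shows "of_int (chi2 w) = w ^ ((CARD('a) - 1) div 2)"
proof (cases "w = 0")
  case True
  then show ?thesis using half_card_pos[OF ch] by (simp add: chi2_def)
next
  case False
  then show ?thesis
    using euler_criterion[OF ch False] power_half_card_cases[OF ch False]
      one_neq_minus_one[OF ch]
    by (auto simp: chi2_def is_square_def)
qed

text \<open>Multiplicativity of \<open>chi2\<close>: by Euler's criterion both sides agree after mapping
  into the field, where \<open>-1, 0, 1\<close> are distinct.\<close>
lemma chi2_mult:
  fixes a b :: "'a::{field,finite}"
  assumes ch: "CHAR('a) \<ge> 3"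
  shows "chi2 (a * b) = chi2 a * chi2 b"
proof -
  have "of_int (chi2 (a * b)) = (of_int (chi2 a * chi2 b) :: 'a)"
    by (simp add: chi2_euler[OF ch] power_mult_distrib)
  then show ?thesis
    using one_neq_minus_one[OF ch] by (auto simp: chi2_def split: if_splits)
qed

lemma chi2_eq_1_iff: "chi2 w = 1 \<longleftrightarrow> w \<noteq> 0 \<and> is_square w"
  unfolding chi2_def is_square_def by auto

lemma chi2_eq_minus_1_iff: "chi2 w = -1 \<longleftrightarrow> w \<noteq> 0 \<and> \<not> is_square w"
  unfolding chi2_def is_square_def by auto

lemma chi2_cases:
  fixes w :: "'a::field"
  assumes "w \<noteq> 0" shows "chi2 w = 1 \<or> chi2 w = -1"
  using assms by (simp add: chi2_def)

lemma is_square_minus_iff: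
  fixes w :: "'a::{field,finite}"
  assumes ch: "CHAR('a) \<ge> 3" and w: "w \<noteq> 0"
  shows "is_square (-w) \<longleftrightarrow> (is_square (-1::'a) \<longleftrightarrow> is_square w)"
proof -
  have square_iff: "is_square x \<longleftrightarrow> chi2 x = 1" if "x \<noteq> 0" for x :: 'a
    using that by (simp add: chi2_eq_1_iff)
  have "chi2 (-w) = chi2 (-1::'a) * chi2 w" using chi2_mult[OF ch, of "-1" w] by simp
  then show ?thesis
    using square_iff[of "-w"] square_iff[of "-1"] square_iff[of w] w
      chi2_cases[OF w] chi2_cases[of "-1::'a"] by auto
qed

lemma chi2_minus_one:
  assumes ch: "CHAR('a::{field,finite}) \<ge> 3"
  shows "chi2 (-1::'a) = 1 \<longleftrightarrow> CARD('a) mod 4 = 1"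
proof -
  define m where "m = (CARD('a) - 1) div 2"
  have "chi2 (-1::'a) = 1 \<longleftrightarrow> (of_int (chi2 (-1::'a)) :: 'a) = 1"
    using chi2_cases[of "-1::'a"] one_neq_minus_one[OF ch] by auto
  also have "\<dots> \<longleftrightarrow> (-1::'a) ^ m = 1"
    by (simp add: chi2_euler[OF ch] m_def)
  also have "\<dots> \<longleftrightarrow> even m"
    using one_neq_minus_one[OF ch] by (auto simp: minus_one_power_iff)
  also have "\<dots> \<longleftrightarrow> CARD('a) mod 4 = 1"
    using card_odd[OF ch] unfolding m_def by presburger
  finally show ?thesis .
qed

text \<open>The second supplement to quadratic reciprocity, in the case \<open>q \<equiv> 1 (mod 4)\<close>:
  with \<open>i^2 = -1\<close> we have \<open>2 i = (1 + i)^2\<close>, so \<open>2\<close> is a square iff \<open>i\<close> is,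
  i.e. iff \<open>i^((q-1)/2) = 1\<close>, i.e. iff \<open>4\<close> divides \<open>(q-1)/2\<close>.\<close>
lemma chi2_two:
  assumes ch: "CHAR('a::{field,finite}) \<ge> 3" and minus_one: "chi2 (-1::'a) = 1"
  shows "chi2 (2::'a) = 1 \<longleftrightarrow> CARD('a) mod 8 = 1"
proof -
  define m where "m = (CARD('a) - 1) div 2"
  obtain i :: 'a where i: "i^2 = -1"
    using minus_one unfolding chi2_eq_1_iff is_square_def by blast
  have i0: "i \<noteq> 0" using i by auto
  have two: "(2::'a) \<noteq> 0" by (rule two_neq_0[OF ch])
  have "(1 + i)^2 = 2 * i" using i by (simp add: power2_eq_square algebra_simps)
  then have "chi2 (2 * i) = 1" using i0 two unfolding chi2_eq_1_iff is_square_def by auto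
  then have "chi2 (2::'a) = chi2 i"
    using chi2_cases[OF i0] chi2_mult[OF ch, of 2 i] by auto
  then have "chi2 (2::'a) = 1 \<longleftrightarrow> i ^ m = 1"
    using chi2_euler[OF ch, of i] chi2_cases[OF i0] one_neq_minus_one[OF ch]
    by (auto simp: m_def)
  also have "i ^ m = i ^ (m mod 4)"
  proof -
    have "i^4 = (i^2)^2" by (simp flip: power_mult)
    then have i4: "i^4 = 1" using i by simp
    have "i ^ m = i ^ (4 * (m div 4) + m mod 4)" by simp
    also have "\<dots> = (i^4) ^ (m div 4) * i ^ (m mod 4)" by (simp only: power_add power_mult)
    finally show ?thesis using i4 by simp
  qed
  also have "i ^ (m mod 4) = 1 \<longleftrightarrow> m mod 4 = 0"
  proof -
    have "i \<noteq> 1" "(-1::'a) \<noteq> 1" using i one_neq_minus_one[OF ch] by auto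
    moreover have "i^3 \<noteq> 1"
    proof
      assume "i^3 = 1"
      then have "-i = 1" using i by (simp add: power3_eq_cube power2_eq_square mult.assoc)
      then have "i = -1" by (simp add: minus_equation_iff)
      then show False using i one_neq_minus_one[OF ch] by simp
    qed
    moreover have "m mod 4 = 0 \<or> m mod 4 = 1 \<or> m mod 4 = 2 \<or> m mod 4 = 3" by linarith
    ultimately show ?thesis using i by (elim disjE) simp_all
  qed
  also have "\<dots> \<longleftrightarrow> CARD('a) mod 8 = 1"
    using card_odd[OF ch] unfolding m_def by presburger
  finally show ?thesis .
qed

text \<open>One of \<open>2, -2\<close> is a square unless \<open>q \<equiv> 5 (mod 8)\<close>: for \<open>q \<equiv> 3 (mod 4)\<close> exactly one
  of them is, as \<open>-1\<close> is a nonsquare.\<close>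
lemma square_two_or_minus_two:
  assumes ch: "CHAR('a::{field,finite}) \<ge> 3"
  shows "is_square (2::'a) \<or> is_square (-2::'a) \<longleftrightarrow> CARD('a) mod 8 \<noteq> 5"
proof -
  have two: "(2::'a) \<noteq> 0" by (rule two_neq_0[OF ch])
  have minus_two: "chi2 (-2::'a) = chi2 (-1::'a) * chi2 (2::'a)"
    using chi2_mult[OF ch, of "-1" "2::'a"] by simp
  have squares: "is_square (2::'a) \<longleftrightarrow> chi2 (2::'a) = 1"
    "is_square (-2::'a) \<longleftrightarrow> chi2 (-2::'a) = 1"
    using two by (simp_all add: chi2_eq_1_iff)
  show ?thesis
  proof (cases "chi2 (-1::'a) = 1")
    case True
    then have "CARD('a) mod 8 = 1 \<or> CARD('a) mod 8 = 5"
      using chi2_minus_one[OF ch] by presburger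
    then show ?thesis using True squares minus_two chi2_two[OF ch True] by auto
  next
    case False
    then have "chi2 (-1::'a) = -1" using chi2_cases[of "-1::'a"] by simp
    moreover have "CARD('a) mod 8 \<noteq> 5"
      using False chi2_minus_one[OF ch] by presburger
    ultimately show ?thesis using squares minus_two chi2_cases[OF two] by auto
  qed
qed

text \<open>Substituting \<open>X \<mapsto> A X + b\<close>, \<open>Y \<mapsto> C Y + D X + d\<close> into the Legendre equation,
  written out coefficientwise (outer index: powers of \<open>Y\<close>, inner: powers of \<open>X\<close>).\<close>
lemma weier_eval_legendre_substituted:
  "weier_eval (legendre u) (cst A * varX + cst b) (cst C * varY + cst D * varX + cst d) =
    [:[:d * d - b * b * b + (1 + u) * (b * b) - u * b,
        2 * (D * d) - 3 * (A * (b * b)) + (1 + u) * (2 * (A * b)) - u * A,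
        D * D - 3 * (A * (A * b)) + (1 + u) * (A * A), - (A * A * A):],
      [:2 * (C * d), 2 * (C * D):], [:C * C:]:]"
  by (simp add: legendre_def varX_def varY_def cst_def power2_eq_square power3_eq_cube
      algebra_simps)

lemma weier_eval_legendre_scaled:
  "cst k * weier_eval (legendre v) varX varY = [:[:0, - k * v, k * (1 + v), - k:], [:0:], [:k:]:]"
  by (simp add: legendre_def varX_def varY_def cst_def power2_eq_square power3_eq_cube
      algebra_simps)

text \<open>Comparing coefficients: an isomorphism between Legendre curves has \<open>\<gamma> = \<delta> = 0\<close>,
  and \<open>\<beta>\<close> must be one of the roots \<open>0, 1, u\<close> of the cubic; the two remaining
  coefficients relate \<open>\<alpha>\<close>, \<open>\<beta>\<close> and \<open>v\<close>.\<close>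
lemma legendre_iso_iff_translation:
  fixes u v :: "'a::field"
  assumes two: "(2::'a) \<noteq> 0"
  shows "weier_iso (legendre u) (legendre v) \<longleftrightarrow>
    (\<exists>a b. a \<noteq> 0 \<and> b \<in> {0, 1, u} \<and> (1 + u) - 3 * b = a^2 * (1 + v) \<and>
       3 * b^2 - 2 * (1 + u) * b + u = a^4 * v)"
proof
  assume "weier_iso (legendre u) (legendre v)"
  then obtain a b g d where a: "a \<noteq> 0" and eq:
    "weier_eval (legendre u) (cst (a^2) * varX + cst b) (cst (a^3) * varY + cst (a^2 * g) * varX + cst d)
      = cst (a^6) * weier_eval (legendre v) varX varY"
    unfolding weier_iso_def by blast
  note coeffs = eq[unfolded weier_eval_legendre_substituted weier_eval_legendre_scaled]
  from coeffs have "2 * (a^3 * d) = 0" and "2 * (a^3 * (a^2 * g)) = 0" by simp_all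
  with two a have "d = 0" and "g = 0" by simp_all
  with coeffs have c0: "- b * b * b + (1 + u) * (b * b) - u * b = 0"
    and c1: "- 3 * (a^2 * (b * b)) + (1 + u) * (2 * (a^2 * b)) - u * a^2 = - (a^6 * v)"
    and c2: "- 3 * (a^2 * (a^2 * b)) + (1 + u) * (a^2 * a^2) = a^6 * (1 + v)"
    by simp_all
  from c0 have "b * (b - 1) * (b - u) = 0" by (simp add: algebra_simps)
  then have "b \<in> {0, 1, u}" by auto
  moreover have "(1 + u) - 3 * b = a^2 * (1 + v)"
  proof -
    from c2 have "a^4 * ((1 + u) - 3 * b) = a^4 * (a^2 * (1 + v))"
      by (simp add: algebra_simps eval_nat_numeral)
    moreover have "a^4 \<noteq> 0" using a by simp
    ultimately show ?thesis using mult_left_cancel by blast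
  qed
  moreover have "3 * b^2 - 2 * (1 + u) * b + u = a^4 * v"
  proof -
    from c1 have "a^2 * (3 * b^2 - 2 * (1 + u) * b + u) = a^2 * (a^4 * v)"
      by (simp add: algebra_simps eval_nat_numeral)
    moreover have "a^2 \<noteq> 0" using a by simp
    ultimately show ?thesis using mult_left_cancel by blast
  qed
  ultimately show "\<exists>a b. a \<noteq> 0 \<and> b \<in> {0, 1, u} \<and> (1 + u) - 3 * b = a^2 * (1 + v) \<and>
       3 * b^2 - 2 * (1 + u) * b + u = a^4 * v"
    using a by blast
next
  assume "\<exists>a b. a \<noteq> 0 \<and> b \<in> {0, 1, u} \<and> (1 + u) - 3 * b = a^2 * (1 + v) \<and>
       3 * b^2 - 2 * (1 + u) * b + u = a^4 * v"
  then obtain a b where a: "a \<noteq> 0" and root: "b * (b - 1) * (b - u) = 0"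
    and h1: "(1 + u) - 3 * b = a^2 * (1 + v)" and h2: "3 * b^2 - 2 * (1 + u) * b + u = a^4 * v"
    by auto
  have "weier_eval (legendre u) (cst (a^2) * varX + cst b) (cst (a^3) * varY + cst (a^2 * 0) * varX + cst 0)
      = cst (a^6) * weier_eval (legendre v) varX varY"
    unfolding weier_eval_legendre_substituted weier_eval_legendre_scaled
    using root h1 h2 by (simp add: eval_nat_numeral) algebra
  then show "weier_iso (legendre u) (legendre v)"
    unfolding weier_iso_def using a by blast
qed

lemma same_sum_product_iff:
  fixes x y s t :: "'a::idom"
  shows "x + y = s + t \<and> x * y = s * t \<longleftrightarrow> (x = s \<and> y = t) \<or> (x = t \<and> y = s)"
proof
  assume h: "x + y = s + t \<and> x * y = s * t"
  then have "(s - x) * (s - y) = 0" by algebra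
  then show "(x = s \<and> y = t) \<or> (x = t \<and> y = s)" using h by auto
qed auto

text \<open>Moving the root \<open>b\<close> of the cubic to \<open>0\<close> and another root \<open>e\<close> to \<open>1\<close> gives the
  Legendre parameter \<open>(e' - b) / (e - b)\<close>; this is possible over the field exactly
  when the scaling factor \<open>e - b\<close> is a square.\<close>
lemma legendre_iso_at_root:
  fixes u v b e e' :: "'a::field"
  assumes sum: "b + e + e' = 1 + u" and prod: "b * e + b * e' + e * e' = u"
    and "e \<noteq> b" and "e' \<noteq> b"
  shows "(\<exists>a. a \<noteq> 0 \<and> (1 + u) - 3 * b = a^2 * (1 + v) \<and> 3 * b^2 - 2 * (1 + u) * b + u = a^4 * v)
    \<longleftrightarrow> (is_square (e - b) \<and> v = (e' - b) / (e - b)) \<or> (is_square (e' - b) \<and> v = (e - b) / (e' - b))"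
proof -
  have linear: "(1 + u) - 3 * b = (e - b) + (e' - b)" using sum by algebra
  have quadratic: "3 * b^2 - 2 * (1 + u) * b + u = (e - b) * (e' - b)" using sum prod by algebra
  have fourth: "a^4 = (a^2)^2" for a :: 'a by (simp flip: power_mult)
  have cond_iff: "((1 + u) - 3 * b = s * (1 + v) \<and> 3 * b^2 - 2 * (1 + u) * b + u = s^2 * v) \<longleftrightarrow>
      (e - b = s \<and> e' - b = s * v) \<or> (e - b = s * v \<and> e' - b = s)" for s
  proof -
    have "((1 + u) - 3 * b = s * (1 + v) \<and> 3 * b^2 - 2 * (1 + u) * b + u = s^2 * v) \<longleftrightarrow>
        ((e - b) + (e' - b) = s + s * v \<and> (e - b) * (e' - b) = s * (s * v))"
      unfolding linear quadratic by (simp add: distrib_left power2_eq_square mult.assoc)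
    then show ?thesis by (simp only: same_sum_product_iff)
  qed
  show ?thesis
    unfolding fourth cond_iff using assms(3,4)
    by (auto simp: is_square_def field_simps)
qed

text \<open>The six Legendre parameters in the orbit of \<open>u\<close> under the anharmonic group, each
  paired with the condition under which the corresponding coordinate change is
  defined over the field (namely that the scaling factor \<open>e - b\<close> is a square).\<close>
definition lambda_orbit :: "'a::field \<Rightarrow> ('a \<times> bool) list" where
  "lambda_orbit u =
    [(u, True), (1 / u, is_square u), (1 - u, is_square (-1::'a)), (1 / (1 - u), is_square (u - 1)),
     ((u - 1) / u, is_square (-u)), (u / (u - 1), is_square (1 - u))]"

text \<open>\<open>E_u \<cong> E_v\<close> iff \<open>v\<close> is one of the admissible orbit elements: choose which root of
  the cubic is moved to \<open>0\<close> and which to \<open>1\<close>.\<close>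
lemma legendre_iso_iff_orbit:
  fixes u v :: "'a::field"
  assumes two: "(2::'a) \<noteq> 0" and u0: "u \<noteq> 0" and u1: "u \<noteq> 1"
  shows "weier_iso (legendre u) (legendre v) \<longleftrightarrow> v \<in> set (map fst (filter snd (lambda_orbit u)))"
proof -
  let ?cond = "\<lambda>b. \<exists>a. a \<noteq> 0 \<and> (1 + u) - 3 * b = a^2 * (1 + v) \<and>
      3 * b^2 - 2 * (1 + u) * b + u = a^4 * v"
  have "weier_iso (legendre u) (legendre v) \<longleftrightarrow> ?cond 0 \<or> ?cond 1 \<or> ?cond u"
    unfolding legendre_iso_iff_translation[OF two] by blast
  also have "\<dots> \<longleftrightarrow>
      ((is_square (1 - 0::'a) \<and> v = (u - 0) / (1 - 0)) \<or> (is_square (u - 0) \<and> v = (1 - 0) / (u - 0))) \<or>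
      ((is_square (0 - 1::'a) \<and> v = (u - 1) / (0 - 1)) \<or> (is_square (u - 1) \<and> v = (0 - 1) / (u - 1))) \<or>
      ((is_square (0 - u) \<and> v = (1 - u) / (0 - u)) \<or> (is_square (1 - u) \<and> v = (0 - u) / (1 - u)))"
    using legendre_iso_at_root[of 0 1 u u v] legendre_iso_at_root[of 1 0 u u v]
      legendre_iso_at_root[of u 0 1 u v] u0 u1
    by (simp add: algebra_simps)
  also have "\<dots> \<longleftrightarrow> v \<in> set (map fst (filter snd (lambda_orbit u)))"
    using u0 u1 by (auto simp: lambda_orbit_def field_simps)
  finally show ?thesis .
qed

lemma orbit_set_explicit:
  "set (map fst (filter snd (lambda_orbit (u::'a::field)))) =
    {u} \<union> (if is_square u then {1 / u} else {}) \<union> (if is_square (-1::'a) then {1 - u} else {})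
      \<union> (if is_square (u - 1) then {1 / (1 - u)} else {})
      \<union> (if is_square (-u) then {(u - 1) / u} else {}) \<union> (if is_square (1 - u) then {u / (u - 1)} else {})"
  unfolding lambda_orbit_def by auto

text \<open>All orbit elements differ from \<open>0\<close> and \<open>1\<close>, so \<open>\<I>_u\<close> is exactly the set of
  admissible orbit elements.\<close>
lemma iso_set_L_orbit:
  fixes u :: "'a::field"
  assumes two: "(2::'a) \<noteq> 0" and u0: "u \<noteq> 0" and u1: "u \<noteq> 1"
  shows "iso_set_L u = set (map fst (filter snd (lambda_orbit u)))"
proof -
  have "v \<noteq> 0 \<and> v \<noteq> 1" if "v \<in> set (map fst (filter snd (lambda_orbit u)))" for v
    using that u0 u1 unfolding orbit_set_explicit by (auto simp: field_simps split: if_splits)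
  then show ?thesis
    unfolding iso_set_L_def legendre_iso_iff_orbit[OF assms] by blast
qed

lemma lambda_orbit_distinct:
  fixes u :: "'a::field"
  assumes u0: "u \<noteq> 0" and u1: "u \<noteq> 1" and generic: "u \<notin> badset"
  shows "distinct (map fst (lambda_orbit u))"
proof -
  have factors: "u^2 - u + 1 \<noteq> 0" "u + 1 \<noteq> 0" "u - 2 \<noteq> 0" "2 * u - 1 \<noteq> 0"
    using generic unfolding badset_def by auto
  have "u * u \<noteq> 1"
  proof
    assume "u * u = 1"
    then have "(u - 1) * (u + 1) = 0" by (simp add: algebra_simps)
    then show False using u1 factors(2) by simp
  qed
  moreover have "u * 2 \<noteq> 1" "1 + u * u \<noteq> u" "u \<noteq> 2"
    using factors by (auto simp: algebra_simps power2_eq_square)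
  moreover have "1 - u \<noteq> 0" "u - 1 \<noteq> 0" using u1 by auto
  ultimately show ?thesis
    using u0 by (simp add: lambda_orbit_def field_simps)
qed

lemma card_iso_set_L_generic:
  fixes u :: "'a::field"
  assumes two: "(2::'a) \<noteq> 0" and u0: "u \<noteq> 0" and u1: "u \<noteq> 1" and generic: "u \<notin> badset"
  shows "card (iso_set_L u) = length (filter snd (lambda_orbit u))"
proof -
  have "distinct (map fst (filter snd (lambda_orbit u)))"
    using lambda_orbit_distinct[OF u0 u1 generic] by (simp add: distinct_map_filter)
  then have "card (set (map fst (filter snd (lambda_orbit u)))) =
      length (map fst (filter snd (lambda_orbit u)))"
    by (rule distinct_card)
  then show ?thesis
    unfolding iso_set_L_orbit[OF two u0 u1] by simp
qed

text \<open>In characteristic 3 the three harmonic parameters \<open>-1, 2, 1/2\<close> all coincide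
  with the equianharmonic one, and the orbit of \<open>-1\<close> collapses to a point.\<close>
lemma card_iso_set_L_char3:
  fixes u :: "'a::field"
  assumes ch: "CHAR('a) = 3" and u: "u = -1"
  shows "card (iso_set_L u) = 1"
proof -
  have two: "(2::'a) \<noteq> 0" using two_neq_0[where 'a='a] ch by simp
  have u0: "u \<noteq> 0" and u1: "u \<noteq> 1"
    using u one_neq_minus_one[where 'a='a] ch by auto
  have "1 - u = -1"
    using u two_eq_minus_one_char3[OF ch] by simp
  then have orbit: "1 / u = -1" "1 - u = -1" "1 / (1 - u) = -1" "(u - 1) / u = -1" "u / (u - 1) = -1"
    using u two by (simp_all add: field_simps)
  have "iso_set_L u = {-1}"
    unfolding iso_set_L_orbit[OF two u0 u1] orbit_set_explicit orbit using u by auto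
  then show ?thesis by simp
qed

lemma harmonic_distinct:
  assumes "(2::'a::field) \<noteq> 0" and "(3::'a) \<noteq> 0"
  shows "(-1::'a) \<noteq> 2" "(-1::'a) \<noteq> 1 / 2" "(2::'a) \<noteq> 1 / 2"
proof -
  have three: "(2::'a) + 1 = 3" "(4::'a) - 1 = 3" by simp_all
  show "(-1::'a) \<noteq> 2"
    using three assms(2) by (auto simp: eq_neg_iff_add_eq_0 add.commute)
  show "(-1::'a) \<noteq> 1 / 2"
  proof
    assume "(-1::'a) = 1 / 2"
    then have "(2::'a) + 1 = 0" using assms(1) by (simp add: field_simps)
    then show False using three assms(2) by simp
  qed
  show "(2::'a) \<noteq> 1 / 2"
  proof
    assume "(2::'a) = 1 / 2"
    then have "(4::'a) - 1 = 0" using assms(1) by (simp add: field_simps)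
    then show False using three assms(2) by simp
  qed
qed

lemma iso_set_L_harmonic:
  fixes u :: "'a::field"
  assumes two: "(2::'a) \<noteq> 0" and three: "(3::'a) \<noteq> 0" and u: "u \<in> {-1, 2, 1 / 2}"
  shows "iso_set_L u =
    (if is_square (2::'a) \<or> is_square (-2::'a) then {-1, 2, 1 / 2}
     else if u = 1 / 2 then {1 / 2} else {-1, 2})"
proof -
  define h :: 'a where "h = 1 / 2"
  note distinct = harmonic_distinct[OF two three, folded h_def]
  have "(2::'a) \<noteq> 1"
  proof
    assume "(2::'a) = 1"
    then have "(1::'a) + 1 = 1 + 0" by simp
    then have "(1::'a) = 0" by (simp only: add_left_cancel)
    then show False by simp
  qed
  then have u01: "u \<noteq> 0" "u \<noteq> 1" using u two distinct by (auto simp: h_def field_simps)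
  note orbit = iso_set_L_orbit[OF two u01] orbit_set_explicit
  have squares_h: "is_square h \<longleftrightarrow> is_square (2::'a)" "is_square (-h) \<longleftrightarrow> is_square (-2::'a)"
    using is_square_inverse[of "2::'a"] is_square_inverse[of "-2::'a"] by (simp_all add: h_def)
  have half: "1 / 2 = h" by (simp add: h_def)
  consider "u = -1" | "u = 2" | "u = h" using u by (auto simp: h_def)
  then show ?thesis
  proof cases
    case 1
    have orbit_values: "1 / (-1) = (-1::'a)" "1 - (-1) = (2::'a)" "(-1) - 1 = (-2::'a)" "(-2) / (-1) = (2::'a)"
      "(-1) / (-2) = h" "- (-1) = (1::'a)"
      using two by (simp_all add: h_def field_simps)
    show ?thesis unfolding orbit unfolding 1 half orbit_values
      using distinct by (cases "is_square (2::'a)"; cases "is_square (-2::'a)"; cases "is_square (-1::'a)") auto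
  next
    case 2
    have orbit_values: "1 - 2 = (-1::'a)" "1 / (-1) = (-1::'a)" "2 - 1 = (1::'a)" "2 / 1 = (2::'a)"
      by simp_all
    show ?thesis unfolding orbit unfolding 2 half orbit_values
      using distinct by (cases "is_square (2::'a)"; cases "is_square (-2::'a)"; cases "is_square (-1::'a)") auto
  next
    case 3
    have orbit_values: "1 / h = 2" "1 - h = h" "h - 1 = -h" "(-h) / h = -1" "h / (-h) = -1"
      using two by (simp_all add: h_def field_simps)
    show ?thesis unfolding orbit unfolding 3 half orbit_values squares_h
      using distinct by (cases "is_square (2::'a)"; cases "is_square (-2::'a)"; cases "is_square (-1::'a)") auto
  qed
qed

text \<open>If \<open>q \<equiv> 5 (mod 8)\<close> the characteristic is not 3: otherwise \<open>-2 = 1\<close> would be a square.\<close>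
lemma CHAR_gt_3_if_card_5_mod_8:
  assumes ch: "CHAR('a::{field,finite}) \<ge> 3" and q: "CARD('a) mod 8 = 5"
  shows "CHAR('a) > 3"
proof (rule ccontr)
  assume "\<not> CHAR('a) > 3"
  then have "CHAR('a) = 3" using ch by simp
  then have "(-2::'a) = 1" using two_eq_minus_one_char3[where 'a='a] by (simp add: minus_equation_iff)
  then have "is_square (-2::'a)" by (simp only: is_square_1)
  then show False using square_two_or_minus_two[OF ch] q by simp
qed

lemma card_iso_set_L_harmonic_split:
  fixes u :: "'a::{field,finite}"
  assumes ch: "CHAR('a) > 3" and u: "u \<in> {-1, 2, inverse 2}" and q: "CARD('a) mod 8 \<in> {1, 3, 7}"
  shows "card (iso_set_L u) = 3"
proof -
  have ch3: "CHAR('a) \<ge> 3" using ch by simp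
  have two: "(2::'a) \<noteq> 0" and three: "(3::'a) \<noteq> 0"
    using two_neq_0[OF ch3] three_neq_0[OF ch] .
  have "is_square (2::'a) \<or> is_square (-2::'a)"
    using square_two_or_minus_two[OF ch3] q by auto
  then have "iso_set_L u = {-1, 2, 1 / 2}"
    using iso_set_L_harmonic[OF two three] u by (simp add: inverse_eq_divide)
  then show ?thesis using harmonic_distinct[OF two three] by simp
qed

text \<open>Harmonic parameters, \<open>q \<equiv> 5 (mod 8)\<close>: \<open>-1\<close> and \<open>2\<close> are still identified via the
  square \<open>-1\<close>, while \<open>1/2\<close> stays alone.\<close>
lemma card_iso_set_L_harmonic_nonsplit:
  fixes u :: "'a::{field,finite}"
  assumes ch: "CHAR('a) \<ge> 3" and q: "CARD('a) mod 8 = 5"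
  shows "u \<in> {-1, 2} \<Longrightarrow> card (iso_set_L u) = 2"
    and "u = inverse 2 \<Longrightarrow> card (iso_set_L u) = 1"
proof -
  have two: "(2::'a) \<noteq> 0" and three: "(3::'a) \<noteq> 0"
    using two_neq_0[OF ch] three_neq_0[OF CHAR_gt_3_if_card_5_mod_8[OF ch q]] .
  have nonsquare: "\<not> (is_square (2::'a) \<or> is_square (-2::'a))"
    using square_two_or_minus_two[OF ch] q by simp
  note distinct = harmonic_distinct[OF two three]
  show "card (iso_set_L u) = 2" if "u \<in> {-1, 2}"
  proof -
    have "iso_set_L u = {-1, 2}"
      using iso_set_L_harmonic[OF two three] that nonsquare distinct by auto
    then show ?thesis using distinct by simp
  qed
  show "card (iso_set_L u) = 1" if "u = inverse 2"
  proof -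
    have "iso_set_L u = {1 / 2}"
      using iso_set_L_harmonic[OF two three] that nonsquare by (simp add: inverse_eq_divide)
    then show ?thesis by simp
  qed
qed

lemma equianharmonic_cube:
  fixes u :: "'a::comm_ring_1"
  assumes "u^2 - u + 1 = 0"
  shows "u^3 = -1"
proof -
  have "u^3 + 1 = (u + 1) * (u^2 - u + 1)" by (simp add: algebra_simps power2_eq_square power3_eq_cube)
  then show ?thesis using assms by (simp add: eq_neg_iff_add_eq_0)
qed

text \<open>For the equianharmonic parameters \<open>u^2 - u + 1 = 0\<close> the orbit is \<open>{u, 1 - u}\<close>,
  and \<open>1 - u = 1/u\<close> is reached iff \<open>u\<close> or \<open>-1\<close> is a square.\<close>
lemma iso_set_L_equianharmonic:
  fixes u :: "'a::field"
  assumes two: "(2::'a) \<noteq> 0" and u: "u^2 - u + 1 = 0"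
  shows "iso_set_L u = (if is_square u \<or> is_square (-1::'a) then {u, 1 - u} else {u})"
proof -
  have uu: "u * u = u - 1" using u by (simp add: power2_eq_square algebra_simps)
  have u0: "u \<noteq> 0" and u1: "u \<noteq> 1" using u by auto
  then have "1 - u \<noteq> 0" "u - 1 \<noteq> 0" by auto
  then have orbit_values: "1 / u = 1 - u" "1 / (1 - u) = u" "(u - 1) / u = u" "u / (u - 1) = 1 - u"
    using u0 uu by (simp_all add: field_simps algebra_simps)
  have "is_square (1 - u) \<longleftrightarrow> is_square u"
    using is_square_inverse[of u] orbit_values(1) by simp
  then show ?thesis
    unfolding iso_set_L_orbit[OF two u0 u1] orbit_set_explicit orbit_values
    by auto
qed

lemma card_mod_6_if_equianharmonic:
  fixes u :: "'a::{field,finite}"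
  assumes ch: "CHAR('a) \<ge> 3" and three: "(3::'a) \<noteq> 0" and u: "u^2 - u + 1 = 0"
  shows "CARD('a) mod 6 = 1"
proof -
  have cube: "u^3 = -1" by (rule equianharmonic_cube[OF u])
  have "u^6 = (u^3)^2" by (simp flip: power_mult)
  then have sixth: "u^6 = 1" using cube by simp
  define r where "r = (CARD('a) - 1) mod 6"
  have "(u^6) ^ ((CARD('a) - 1) div 6) * u^r = u ^ (6 * ((CARD('a) - 1) div 6) + r)"
    by (simp only: power_add power_mult)
  also have "\<dots> = u ^ (CARD('a) - 1)" unfolding r_def by simp
  also have "\<dots> = 1" using u by (intro fermat_little) auto
  finally have "(u^6) ^ ((CARD('a) - 1) div 6) * u^r = 1" .
  then have ur: "u^r = 1" using sixth by simp
  have "even (CARD('a) - 1)" using card_minus_one_even[OF ch] by (metis dvd_triv_left)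
  then have "even r" "r < 6" unfolding r_def by (simp_all add: dvd_mod_iff)
  then have "r = 0 \<or> r = 2 \<or> r = 4" by presburger
  moreover have "r \<noteq> 2"
  proof
    assume "r = 2"
    then have "u * u = 1" using ur by (simp add: power2_eq_square)
    then have "u = 2" using u by (simp add: power2_eq_square algebra_simps)
    then show False using u three by (simp add: power2_eq_square)
  qed
  moreover have "r \<noteq> 4"
  proof
    assume "r = 4"
    then have "u * u^3 = 1" using ur by (simp flip: power_Suc)
    then have "u = -1" using cube by (simp add: minus_equation_iff)
    then show False using u three by (simp add: power2_eq_square)
  qed
  ultimately have "6 dvd (CARD('a) - 1)" unfolding r_def by auto
  then show ?thesis using card_odd[OF ch] by presburger
qed

text \<open>If moreover \<open>q \<not>\<equiv> 1 (mod 12)\<close>, then \<open>q \<equiv> 7 (mod 12)\<close>, so \<open>-1\<close> is a nonsquare,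
  and \<open>u^((q-1)/2) = (u^3)^((q-1)/6) = -1\<close> since \<open>(q-1)/6\<close> is odd.\<close>
lemma equianharmonic_nonsquares:
  fixes u :: "'a::{field,finite}"
  assumes ch: "CHAR('a) \<ge> 3" and three: "(3::'a) \<noteq> 0" and u: "u^2 - u + 1 = 0"
    and q: "CARD('a) mod 12 \<noteq> 1"
  shows "\<not> is_square u \<and> \<not> is_square (-1::'a)"
proof -
  have q6: "CARD('a) mod 6 = 1" by (rule card_mod_6_if_equianharmonic[OF ch three u])
  obtain k where qk: "CARD('a) = 6 * k + 1"
    using q6 by (metis div_mult_mod_eq mult.commute)
  have half: "(CARD('a) - 1) div 2 = 3 * k" using qk by simp
  have k_odd: "odd k" using qk q by presburger
  have u0: "u \<noteq> 0" using u by auto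
  have "CARD('a) mod 4 \<noteq> 1" using qk k_odd by presburger
  then have "chi2 (-1::'a) \<noteq> 1" using chi2_minus_one[OF ch] by simp
  then have "\<not> is_square (-1::'a)" by (simp add: chi2_eq_1_iff)
  moreover have "(of_int (chi2 u) :: 'a) = -1"
    unfolding chi2_euler[OF ch] half power_mult equianharmonic_cube[OF u] using k_odd by simp
  then have "chi2 u \<noteq> 1" using one_neq_minus_one[OF ch] by auto
  then have "\<not> is_square u" using u0 by (simp add: chi2_eq_1_iff)
  ultimately show ?thesis by blast
qed

text \<open>Equianharmonic parameters, \<open>q \<equiv> 1 (mod 12)\<close>: \<open>-1\<close> is a square and \<open>u \<noteq> 1 - u\<close>.\<close>
lemma card_iso_set_L_equianharmonic_split:
  fixes u :: "'a::{field,finite}"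
  assumes ch: "CHAR('a) > 3" and u: "u^2 - u + 1 = 0" and q: "CARD('a) mod 12 = 1"
  shows "card (iso_set_L u) = 2"
proof -
  have ch3: "CHAR('a) \<ge> 3" using ch by simp
  have two: "(2::'a) \<noteq> 0" and three: "(3::'a) \<noteq> 0"
    using two_neq_0[OF ch3] three_neq_0[OF ch] .
  have "CARD('a) mod 4 = 1" using q by presburger
  then have "is_square (-1::'a)" using chi2_minus_one[OF ch3] by (simp add: chi2_eq_1_iff)
  then have "iso_set_L u = {u, 1 - u}" using iso_set_L_equianharmonic[OF two u] by simp
  moreover have "u \<noteq> 1 - u"
  proof
    assume "u = 1 - u"
    then have half: "2 * u = 1" by (simp add: algebra_simps)
    have "4 * (u^2 - u + 1) = (2 * u)^2 - 2 * (2 * u) + 4"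
      by (simp add: power2_eq_square algebra_simps)
    then have "4 * (u^2 - u + 1) = (3::'a)" unfolding half by simp
    then show False using u three by simp
  qed
  ultimately show ?thesis by simp
qed

text \<open>Equianharmonic parameters, \<open>q \<not>\<equiv> 1 (mod 12)\<close>: in characteristic 3 the orbit is the
  single point \<open>-1\<close>, otherwise neither \<open>u\<close> nor \<open>-1\<close> is a square.\<close>
lemma card_iso_set_L_equianharmonic_nonsplit:
  fixes u :: "'a::{field,finite}"
  assumes ch: "CHAR('a) \<ge> 3" and u: "u^2 - u + 1 = 0" and q: "CARD('a) mod 12 \<noteq> 1"
  shows "card (iso_set_L u) = 1"
proof -
  have two: "(2::'a) \<noteq> 0" by (rule two_neq_0[OF ch])
  have "iso_set_L u = {u}"
  proof (cases "CHAR('a) = 3")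
    case True
    have "(u + 1)^2 = (u^2 - u + 1) + 3 * u" by (simp add: power2_eq_square algebra_simps)
    then have "(u + 1)^2 = 0" using u three_eq_0[OF True] by simp
    then have "u = -1" by (simp add: eq_neg_iff_add_eq_0)
    then have "1 - u = u" using two_eq_minus_one_char3[OF True] by simp
    then show ?thesis using iso_set_L_equianharmonic[OF two u] by simp
  next
    case False
    then have "(3::'a) \<noteq> 0" using three_neq_0[where 'a='a] ch by simp
    then show ?thesis
      using equianharmonic_nonsquares[OF ch _ u q] iso_set_L_equianharmonic[OF two u] by simp
  qed
  then show ?thesis by simp
qed

text \<open>Generic parameters, \<open>q \<equiv> 3 (mod 4)\<close>: exactly one of \<open>u, -u\<close> and exactly one of
  \<open>1 - u, u - 1\<close> is a square, so three of the six orbit elements are reached.\<close>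
lemma card_iso_set_L_generic_nonsplit:
  fixes u :: "'a::{field,finite}"
  assumes ch: "CHAR('a) \<ge> 3" and u0: "u \<noteq> 0" and u1: "u \<noteq> 1" and generic: "u \<notin> badset"
    and minus_one: "chi2 (-1::'a) = -1"
  shows "card (iso_set_L u) = 3"
proof -
  have "\<not> is_square (-1::'a)" using minus_one by (simp add: chi2_eq_minus_1_iff)
  moreover have "is_square (-u) \<longleftrightarrow> \<not> is_square u" "is_square (u - 1) \<longleftrightarrow> \<not> is_square (1 - u)"
    using is_square_minus_iff[OF ch u0] is_square_minus_iff[OF ch, of "1 - u"] u1 calculation
    by auto
  ultimately show ?thesis
    unfolding card_iso_set_L_generic[OF two_neq_0[OF ch] u0 u1 generic] lambda_orbit_def
    by (cases "is_square u"; cases "is_square (1 - u)") simp_all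
qed

text \<open>Generic parameters, \<open>q \<equiv> 1 (mod 4)\<close>: the orbit elements come in pairs
  \<open>{u, 1 - u}\<close>, \<open>{1/u, (u-1)/u}\<close>, \<open>{1/(1-u), u/(u-1)}\<close>, the last two reached
  iff \<open>u\<close>, respectively \<open>1 - u\<close>, is a square.\<close>
lemma card_iso_set_L_generic_split:
  fixes u :: "'a::{field,finite}"
  assumes ch: "CHAR('a) \<ge> 3" and u0: "u \<noteq> 0" and u1: "u \<noteq> 1" and generic: "u \<notin> badset"
    and minus_one: "chi2 (-1::'a) = 1"
  shows "card (iso_set_L u) = 2 + (if chi2 u = 1 then 2 else 0) + (if chi2 (1 - u) = 1 then 2 else 0)"
proof -
  have "is_square (-1::'a)" using minus_one by (simp add: chi2_eq_1_iff)
  moreover have "is_square (-u) \<longleftrightarrow> is_square u" "is_square (u - 1) \<longleftrightarrow> is_square (1 - u)"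
    using is_square_minus_iff[OF ch u0] is_square_minus_iff[OF ch, of "1 - u"] u1 calculation
    by auto
  moreover have "chi2 u = 1 \<longleftrightarrow> is_square u" "chi2 (1 - u) = 1 \<longleftrightarrow> is_square (1 - u)"
    using u0 u1 by (simp_all add: chi2_eq_1_iff)
  ultimately show ?thesis
    unfolding card_iso_set_L_generic[OF two_neq_0[OF ch] u0 u1 generic] lambda_orbit_def
    by (cases "is_square u"; cases "is_square (1 - u)") simp_all
qed

theorem mainTheorem2:
  fixes u :: "'a::{field, finite}"
  assumes "CHAR('a) \<ge> 3"
    and "u \<noteq> 0" and "u \<noteq> 1"
  shows
   "(u = -1 \<and> CHAR('a) = 3 \<longrightarrow> card (iso_set_L u) = 1) \<and>
    (u \<in> {-1, 2, inverse 2} \<and> CARD('a) mod 8 \<in> {1, 3, 7} \<and> CHAR('a) > 3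
       \<longrightarrow> card (iso_set_L u) = 3) \<and>
    (u \<in> {-1, 2} \<and> CARD('a) mod 8 = 5 \<longrightarrow> card (iso_set_L u) = 2) \<and>
    (u = inverse 2 \<and> CARD('a) mod 8 = 5 \<longrightarrow> card (iso_set_L u) = 1) \<and>
    (u^2 - u + 1 = 0 \<and> CARD('a) mod 12 = 1 \<and> CHAR('a) > 3 \<longrightarrow> card (iso_set_L u) = 2) \<and>
    (u^2 - u + 1 = 0 \<and> CARD('a) mod 12 \<noteq> 1 \<longrightarrow> card (iso_set_L u) = 1) \<and>
    (chi2 (-1 :: 'a) = -1 \<and> u \<notin> badset \<longrightarrow> card (iso_set_L u) = 3) \<and>
    (chi2 (-1 :: 'a) = 1 \<and> chi2 u = -1 \<and> chi2 (1 - u) = -1 \<and> u \<notin> badset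
       \<longrightarrow> card (iso_set_L u) = 2) \<and>
    (chi2 (-1 :: 'a) = 1 \<and> chi2 u * chi2 (1 - u) = -1 \<and> u \<notin> badset
       \<longrightarrow> card (iso_set_L u) = 4) \<and>
    (chi2 (-1 :: 'a) = 1 \<and> chi2 u = 1 \<and> chi2 (1 - u) = 1 \<and> u \<notin> badset
       \<longrightarrow> card (iso_set_L u) = 6)"
proof (intro conjI impI; elim conjE)
  note ch = assms(1) and u0 = assms(2) and u1 = assms(3)
  note generic_split = card_iso_set_L_generic_split[OF ch u0 u1]
  show "card (iso_set_L u) = 1" if "u = -1" "CHAR('a) = 3"
    using card_iso_set_L_char3 that by blast
  show "card (iso_set_L u) = 3" if "u \<in> {-1, 2, inverse 2}" "CARD('a) mod 8 \<in> {1, 3, 7}" "CHAR('a) > 3"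
    using card_iso_set_L_harmonic_split that by blast
  show "card (iso_set_L u) = 2" if "u \<in> {-1, 2}" "CARD('a) mod 8 = 5"
    using card_iso_set_L_harmonic_nonsplit(1)[OF ch] that by blast
  show "card (iso_set_L u) = 1" if "u = inverse 2" "CARD('a) mod 8 = 5"
    using card_iso_set_L_harmonic_nonsplit(2)[OF ch] that by blast
  show "card (iso_set_L u) = 2" if "u^2 - u + 1 = 0" "CARD('a) mod 12 = 1" "CHAR('a) > 3"
    using card_iso_set_L_equianharmonic_split that by blast
  show "card (iso_set_L u) = 1" if "u^2 - u + 1 = 0" "CARD('a) mod 12 \<noteq> 1"
    using card_iso_set_L_equianharmonic_nonsplit[OF ch] that by blast
  show "card (iso_set_L u) = 3" if "chi2 (-1 :: 'a) = -1" "u \<notin> badset"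
    using card_iso_set_L_generic_nonsplit[OF ch u0 u1] that by blast
  show "card (iso_set_L u) = 2"
    if "chi2 (-1 :: 'a) = 1" "chi2 u = -1" "chi2 (1 - u) = -1" "u \<notin> badset"
    using generic_split that by simp
  show "card (iso_set_L u) = 4"
    if "chi2 (-1 :: 'a) = 1" "chi2 u * chi2 (1 - u) = -1" "u \<notin> badset"
    using generic_split that chi2_cases[OF u0] by auto
  show "card (iso_set_L u) = 6"
    if "chi2 (-1 :: 'a) = 1" "chi2 u = 1" "chi2 (1 - u) = 1" "u \<notin> badset"
    using generic_split that by simp
qed

end
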